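(* Let $1\le m<k$ and let $G$ be a complete $k$-partite graph in which exactly $m$ partite sets have cardinality $1$ and the remaining $k-m$ partite sets have cardinality at least $2$. Then $\rho_T(G)=k-m$.
   Context: Graphs are finite and simple. A complete $k$-partite graph is one whose vertex set is partitioned into $k$ nonempty independent sets (partite sets) such that two vertices are adjacent iff they lie in different partite sets. For $u,v\in(\mathbb{R}\cup\{\infty\})^k$ the min-plus tropical dot product is $u\odot v=\min_i(u_i+v_i)$. A min-plus $k$-tropical dot product representation of $G=(V,E)$ is a map $f:V\to(\mathbb{R}\cup\{\infty\})^k$ with a threshold $t>0$ such that for all distinct $x,y\in V$: $xy\in E$ iff $f(x)\odot f(y)\ge t$. $\rho_T(G)$ is the least $k\ge 1$ for which such a representation exists. *)

theory Defs
  imports Main "HOL-Library.Extended_Real"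
begin

text \<open>A finite simple graph: finite vertex set V, symmetric irreflexive adjacency E
  (only its restriction to V matters).\<close>
definition simple_graph :: "'a set \<Rightarrow> ('a \<Rightarrow> 'a \<Rightarrow> bool) \<Rightarrow> bool" where
  "simple_graph V E \<longleftrightarrow> finite V \<and> (\<forall>x y. E x y \<longrightarrow> E y x) \<and> (\<forall>x. \<not> E x x)"

definition complete_multipartite_partition ::
  "'a set \<Rightarrow> ('a \<Rightarrow> 'a \<Rightarrow> bool) \<Rightarrow> 'a set set \<Rightarrow> nat \<Rightarrow> bool" where
  "complete_multipartite_partition V E P k \<longleftrightarrow>
     finite P \<and> card P = k \<and> (\<forall>A\<in>P. A \<noteq> {}) \<and> \<Union>P = V \<and>
     (\<forall>A\<in>P. \<forall>B\<in>P. A \<noteq> B \<longrightarrow> A \<inter> B = {}) \<and>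
     (\<forall>x\<in>V. \<forall>y\<in>V. x \<noteq> y \<longrightarrow> (E x y \<longleftrightarrow> \<not> (\<exists>A\<in>P. x \<in> A \<and> y \<in> A)))"

text \<open>Vectors in (R \<union> {\<infinity>})^k are functions nat \<Rightarrow> ereal, coordinates 0..k-1,
  never equal to -\<infinity>.\<close>
definition trop_dot :: "nat \<Rightarrow> (nat \<Rightarrow> ereal) \<Rightarrow> (nat \<Rightarrow> ereal) \<Rightarrow> ereal" where
  "trop_dot k u v = Min ((\<lambda>i. u i + v i) ` {..<k})"

definition trop_rep :: "'a set \<Rightarrow> ('a \<Rightarrow> 'a \<Rightarrow> bool) \<Rightarrow> nat \<Rightarrow> ('a \<Rightarrow> nat \<Rightarrow> ereal) \<Rightarrow> real \<Rightarrow> bool" where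
  "trop_rep V E k f t \<longleftrightarrow> t > 0 \<and> (\<forall>x\<in>V. \<forall>i<k. f x i \<noteq> -\<infinity>) \<and>
     (\<forall>x\<in>V. \<forall>y\<in>V. x \<noteq> y \<longrightarrow> (E x y \<longleftrightarrow> trop_dot k (f x) (f y) \<ge> ereal t))"

definition has_trop_rep :: "'a set \<Rightarrow> ('a \<Rightarrow> 'a \<Rightarrow> bool) \<Rightarrow> nat \<Rightarrow> bool" where
  "has_trop_rep V E k \<longleftrightarrow> (\<exists>f t. trop_rep V E k f t)"

definition rho_T :: "'a set \<Rightarrow> ('a \<Rightarrow> 'a \<Rightarrow> bool) \<Rightarrow> nat" where
  "rho_T V E = (LEAST k. k \<ge> 1 \<and> has_trop_rep V E k)"

end

theory Submission
  imports Defs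
begin

text \<open>Only the parts with at least two vertices matter. For the upper bound give each such part
  its own coordinate, on which its vertices are 0 and all other vertices are 1; with threshold 1,
  two vertices are then non-adjacent exactly when they share a part. For the lower bound, every
  such part contains a non-edge, and a non-edge forces some coordinate below the threshold.
  Two non-edges {x,y} and {u,w} from different parts cannot use the same coordinate i: the edges
  xu and yw would give 2t \<le> (f x i + f y i) + (f u i + f w i) < 2t. So the number of these
  parts is at most the dimension.\<close>

lemma trop_dot_ge_iff:
  assumes "0 < k"
  shows "a \<le> trop_dot k u v \<longleftrightarrow> (\<forall>i<k. a \<le> u i + v i)"
  using assms unfolding trop_dot_def by (subst Min_ge_iff) auto

lemma trop_rep_adj_iff:
  assumes "trop_rep V E k f t" "0 < k" "x \<in> V" "y \<in> V" "x \<noteq> y"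
  shows "E x y \<longleftrightarrow> (\<forall>i<k. ereal t \<le> f x i + f y i)"
  using assms by (simp add: trop_rep_def trop_dot_ge_iff)

lemma trop_rep_nonedge_coord:
  assumes "trop_rep V E k f t" "0 < k" "x \<in> V" "y \<in> V" "x \<noteq> y" "\<not> E x y"
  obtains i where "i < k" "f x i + f y i < ereal t"
  using assms trop_rep_adj_iff[OF assms(1-5)] by (auto simp: not_le)

lemma trop_rep_nonedge_coord_exchange:
  assumes rep: "trop_rep V E k f t"
    and V: "x \<in> V" "y \<in> V" "u \<in> V" "w \<in> V"
    and edges: "x \<noteq> u" "E x u" "y \<noteq> w" "E y w"
    and i: "i < k" "f x i + f y i < ereal t"
  shows "ereal t \<le> f u i + f w i"
proof -
  have "ereal t \<le> f x i + f u i" "ereal t \<le> f y i + f w i"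
    using edges i V trop_rep_adj_iff[OF rep] by auto
  moreover have "f z i \<noteq> -\<infinity>" if "z \<in> V" for z
    using rep that i unfolding trop_rep_def by blast
  ultimately show ?thesis
    using V i by (cases "f x i"; cases "f y i"; cases "f u i"; cases "f w i") simp_all
qed

lemma card_le_trop_dim_of_joined_nonedges:
  assumes rep: "trop_rep V E k f t" and "0 < k"
    and nonedge: "\<And>j. j \<in> J \<Longrightarrow> a j \<in> V \<and> b j \<in> V \<and> a j \<noteq> b j \<and> \<not> E (a j) (b j)"
    and joined: "\<And>j l. j \<in> J \<Longrightarrow> l \<in> J \<Longrightarrow> j \<noteq> l \<Longrightarrow>
      a j \<noteq> a l \<and> E (a j) (a l) \<and> b j \<noteq> b l \<and> E (b j) (b l)"
  shows "card J \<le> k"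
proof -
  define c where "c j = (SOME i. i < k \<and> f (a j) i + f (b j) i < ereal t)" for j
  have c: "c j < k \<and> f (a j) (c j) + f (b j) (c j) < ereal t" if "j \<in> J" for j
  proof -
    have "\<exists>i. i < k \<and> f (a j) i + f (b j) i < ereal t"
      using nonedge[OF \<open>j \<in> J\<close>] by (meson trop_rep_nonedge_coord[OF rep \<open>0 < k\<close>])
    then show ?thesis
      unfolding c_def by (rule someI_ex)
  qed
  have "inj_on c J"
  proof (rule inj_onI, rule ccontr)
    fix j l assume jl: "j \<in> J" "l \<in> J" "c j = c l" "j \<noteq> l"
    have "a j \<in> V" "b j \<in> V" "a l \<in> V" "b l \<in> V"
      using nonedge jl(1,2) by auto
    moreover have "a j \<noteq> a l" "E (a j) (a l)" "b j \<noteq> b l" "E (b j) (b l)"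
      using joined[OF jl(1,2,4)] by auto
    ultimately have "ereal t \<le> f (a l) (c j) + f (b l) (c j)"
      using c[OF jl(1)] by (intro trop_rep_nonedge_coord_exchange[OF rep]) auto
    then show False
      using c[OF jl(2)] jl(3) by (simp add: not_le[symmetric])
  qed
  moreover have "c ` J \<subseteq> {..<k}"
    using c by auto
  ultimately have "card J \<le> card {..<k}"
    by (intro card_inj_on_le) auto
  then show ?thesis
    by simp
qed

lemma complete_multipartite_adj_iff:
  assumes "complete_multipartite_partition V E P k" "x \<in> V" "y \<in> V" "x \<noteq> y"
  shows "E x y \<longleftrightarrow> \<not> (\<exists>A\<in>P. x \<in> A \<and> y \<in> A)"
  using assms unfolding complete_multipartite_partition_def by simp

lemma complete_multipartite_cross_adj:
  assumes G: "complete_multipartite_partition V E P k"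
    and AB: "A \<in> P" "B \<in> P" "A \<noteq> B" and "x \<in> A" "y \<in> B"
  shows "x \<noteq> y \<and> E x y"
proof -
  have disj: "C \<inter> D = {}" if "C \<in> P" "D \<in> P" "C \<noteq> D" for C D
    using G that by (simp add: complete_multipartite_partition_def)
  have "\<Union>P = V"
    using G by (simp add: complete_multipartite_partition_def)
  then have "x \<in> V" "y \<in> V"
    using AB \<open>x \<in> A\<close> \<open>y \<in> B\<close> by blast+
  moreover have "x \<noteq> y"
    using disj[OF AB] \<open>x \<in> A\<close> \<open>y \<in> B\<close> by blast
  moreover have "\<not> (\<exists>C\<in>P. x \<in> C \<and> y \<in> C)"
    using disj AB \<open>x \<in> A\<close> \<open>y \<in> B\<close> by blast
  ultimately show ?thesis
    using complete_multipartite_adj_iff[OF G] by blast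
qed

lemma complete_multipartite_has_trop_rep:
  assumes G: "complete_multipartite_partition V E P k"
    and pos: "0 < card {A \<in> P. card A \<noteq> 1}"
  shows "has_trop_rep V E (card {A \<in> P. card A \<noteq> 1})"
proof -
  define Q where "Q = {A \<in> P. card A \<noteq> 1}"
  define n where "n = card Q"
  have "finite Q"
    using pos unfolding Q_def by (metis card.infinite less_irrefl)
  then obtain h where h: "h ` {..<n} = Q"
    using ex_bij_betw_nat_finite bij_betw_imp_surj_on unfolding n_def atLeast0LessThan by metis
  have shared_part: "(\<exists>A\<in>P. x \<in> A \<and> y \<in> A) \<longleftrightarrow> (\<exists>i<n. x \<in> h i \<and> y \<in> h i)"
    if "x \<noteq> y" for x y
  proof
    assume "\<exists>A\<in>P. x \<in> A \<and> y \<in> A"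
    then obtain A where A: "A \<in> P" "x \<in> A" "y \<in> A"
      by blast
    then have "A \<in> Q"
      using \<open>x \<noteq> y\<close> unfolding Q_def by (auto simp: card_1_singleton_iff)
    with h A show "\<exists>i<n. x \<in> h i \<and> y \<in> h i"
      by auto
  next
    assume "\<exists>i<n. x \<in> h i \<and> y \<in> h i"
    moreover have "h i \<in> P" if "i < n" for i
      using h that unfolding Q_def by auto
    ultimately show "\<exists>A\<in>P. x \<in> A \<and> y \<in> A"
      by blast
  qed
  define f where "f x i = (if x \<in> h i then 0 else 1 :: ereal)" for x i
  have f_ge_1: "ereal 1 \<le> f x i + f y i \<longleftrightarrow> \<not> (x \<in> h i \<and> y \<in> h i)" for x y i
    by (simp add: f_def one_ereal_def[symmetric])
  have "0 < n"
    using pos unfolding n_def Q_def .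
  then have "trop_rep V E n f 1"
    unfolding trop_rep_def
    using complete_multipartite_adj_iff[OF G] shared_part
    by (auto simp: trop_dot_ge_iff f_ge_1 f_def)
  then show ?thesis
    unfolding has_trop_rep_def n_def Q_def by blast
qed

lemma complete_multipartite_trop_dim_ge:
  assumes G: "complete_multipartite_partition V E P k"
    and rep: "trop_rep V E k' f t" "0 < k'"
  shows "card {A \<in> P. card A \<noteq> 1} \<le> k'"
proof -
  define Q where "Q = {A \<in> P. card A \<noteq> 1}"
  have "\<exists>x y. x \<in> A \<and> y \<in> A \<and> x \<noteq> y" if "A \<in> Q" for A
  proof -
    have "A \<noteq> {}"
      using G that by (simp add: Q_def complete_multipartite_partition_def)
    then obtain x where "x \<in> A"
      by blast
    moreover have "A \<noteq> {x}"
      using that unfolding Q_def by auto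
    ultimately show ?thesis
      by blast
  qed
  then obtain a b where ab: "\<And>A. A \<in> Q \<Longrightarrow> a A \<in> A \<and> b A \<in> A \<and> a A \<noteq> b A"
    by metis
  have "\<Union>P = V"
    using G by (simp add: complete_multipartite_partition_def)
  have "card Q \<le> k'"
  proof (rule card_le_trop_dim_of_joined_nonedges[OF rep])
    fix A assume "A \<in> Q"
    then have "A \<in> P" "a A \<in> A" "b A \<in> A" "a A \<noteq> b A"
      using ab unfolding Q_def by auto
    moreover have "a A \<in> V" "b A \<in> V"
      using \<open>\<Union>P = V\<close> calculation by blast+
    ultimately show "a A \<in> V \<and> b A \<in> V \<and> a A \<noteq> b A \<and> \<not> E (a A) (b A)"
      using complete_multipartite_adj_iff[OF G] by blast
  next
    fix A B assume "A \<in> Q" "B \<in> Q" "A \<noteq> B"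
    moreover have "Q \<subseteq> P"
      unfolding Q_def by auto
    ultimately show "a A \<noteq> a B \<and> E (a A) (a B) \<and> b A \<noteq> b B \<and> E (b A) (b B)"
      using ab complete_multipartite_cross_adj[OF G] by (meson subsetD)
  qed
  then show ?thesis
    unfolding Q_def .
qed

lemma rho_T_eqI:
  assumes "0 < n" "has_trop_rep V E n"
    and "\<And>k f t. 0 < k \<Longrightarrow> trop_rep V E k f t \<Longrightarrow> n \<le> k"
  shows "rho_T V E = n"
  unfolding rho_T_def
  by (rule Least_equality) (use assms in \<open>auto simp: has_trop_rep_def\<close>)

theorem mainTheorem15:
  fixes V :: "'a set" and E :: "'a \<Rightarrow> 'a \<Rightarrow> bool" and P :: "'a set set" and k m :: nat
  assumes "simple_graph V E"
    and "complete_multipartite_partition V E P k"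
    and "1 \<le> m" and "m < k"
    and "card {A \<in> P. card A = 1} = m"
    and "\<forall>A\<in>P. card A \<noteq> 1 \<longrightarrow> card A \<ge> 2"
  shows "rho_T V E = k - m"
proof -
  have "finite P" "card P = k"
    using assms(2) by (simp_all add: complete_multipartite_partition_def)
  moreover have "{A \<in> P. card A \<noteq> 1} = P - {A \<in> P. card A = 1}"
    by blast
  ultimately have parts: "card {A \<in> P. card A \<noteq> 1} = k - m"
    using assms(5) by (simp add: card_Diff_subset)
  show ?thesis
  proof (rule rho_T_eqI)
    show "0 < k - m"
      using assms(4) by simp
    show "has_trop_rep V E (k - m)"
      using complete_multipartite_has_trop_rep[OF assms(2)] parts assms(4) by simp
    show "k - m \<le> k'" if "0 < k'" "trop_rep V E k' f t" for k' f t
      using complete_multipartite_trop_dim_ge[OF assms(2) that(2,1)] parts by simp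
  qed
qed

end
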